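(* Let $\mu,\nu$ be Borel probability measures on $[0,1)$ such that $\mu$ does not charge the boundaries of dyadic intervals ($\mu(\{j2^{-k}\})=0$ for all integers $j,k\ge0$) and $\nu$ is dyadically doubling with constant $D_\nu$. For every $\kappa>0$ there is a constant $C$, depending only on $\kappa$ and $D_\nu$, such that for every $I\in\mathcal{D}$ and every admissible pair $(N_1,N_2)$, $$\Delta_{\mu,\nu}(I)\mu(I)\le C\sum_{J\in\mathbf{Tail}_I}\alpha_{\mu,\nu}(J)\mu(J)+\kappa\sum_{J\in\mathbf{Tail}_I}\Delta_{\mu,\nu}(J)\mu(J)+4\mu(\mathbf{Tip}_I).$$
   Context: $\mathcal{D}$: dyadic intervals $[j2^{-k},(j+1)2^{-k})\subset[0,1)$, $k\ge0$; $I_-,I_+$ are the left and right halves of $I$. For $I\in\mathcal{D}$ set $I_{0-}=I_{0+}=I$, $I_{k-}:=(I_{(k-1)-})_-$, $I_{k+}:=(I_{(k-1)+})_+$ for $k\ge1$. Admissible pairs: $N_1,N_2\in\{0,1,2,\ldots\}\cup\{\infty\}$, or the special pair $(N_1,N_2)=(0,-1)$. For $N_1,N_2\ge0$: $\mathbf{Tail}_I$ consists of $I_{k-}$ for $0\le k\le N_1$ and $(I_-)_{k+}$ for $0\le k\le N_2$ (finite $k$ only), and $\mathbf{Tip}_I := I_{(N_1+1)-}\cup(I_-)_{(N_2+1)+}$, where a component with $N_i=\infty$ is omitted. For the special pair, $\mathbf{Tail}_I=\{I\}$ and $\mathbf{Tip}_I=I_-$. $\Delta_{\mu,\nu}(J):=|\mu(J_-)/\mu(J)-\nu(J_-)/\nu(J)|$,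 with $\Delta_{\mu,\nu}(J)\mu(J):=0$ if $\mu(J)=0$. Wasserstein distance: $\mathbb{W}_1(\nu_1,\nu_2) := \sup_\psi |\int\psi\,d\nu_1 - \int\psi\,d\nu_2|$ over all $1$-Lipschitz $\psi\colon\mathbb{R}\to\mathbb{R}$ supported on $[0,1]$. $T_J$ is the increasing affine map from $\overline J$ onto $[0,1]$, $\mu_J := T_{J\sharp}(\mu|_J)/\mu(J)$, $\nu_J := T_{J\sharp}(\nu|_J)/\nu(J)$ (zero if the mass vanishes), $\alpha_{\mu,\nu}(J) := \mathbb{W}_1(\mu_J,\nu_J)$. *)

theory Defs
  imports "HOL-Probability.Probability"
begin

text \<open>Dyadic intervals are indexed by pairs (k, j) with j < 2^k;
  the interval is [j 2^-k, (j+1) 2^-k).\<close>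

type_synonym dyidx = "nat \<times> nat"

definition is_dyadic :: "dyidx \<Rightarrow> bool" where
  "is_dyadic I \<longleftrightarrow> snd I < 2 ^ fst I"

definition dyad :: "dyidx \<Rightarrow> real set" where
  "dyad I = {real (snd I) / 2 ^ fst I ..< (real (snd I) + 1) / 2 ^ fst I}"

definition dleft :: "dyidx \<Rightarrow> dyidx" where
  "dleft I = (Suc (fst I), 2 * snd I)"

definition dright :: "dyidx \<Rightarrow> dyidx" where
  "dright I = (Suc (fst I), 2 * snd I + 1)"

text \<open>Admissible pairs: (N1, N2) with N1, N2 in nat \<union> {\<infinity>}, or the special pair (0,-1).\<close>

datatype adm_pair = Reg enat enat | Special

definition Tail :: "adm_pair \<Rightarrow> dyidx \<Rightarrow> dyidx set" where
  "Tail p I = (case p of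
      Reg N1 N2 \<Rightarrow> {(dleft ^^ n) I | n. enat n \<le> N1}
                   \<union> {(dright ^^ n) (dleft I) | n. enat n \<le> N2}
    | Special \<Rightarrow> {I})"

definition Tip :: "adm_pair \<Rightarrow> dyidx \<Rightarrow> real set" where
  "Tip p I = (case p of
      Reg N1 N2 \<Rightarrow>
        (if N1 = \<infinity> then {} else dyad ((dleft ^^ (the_enat N1 + 1)) I))
        \<union> (if N2 = \<infinity> then {} else dyad ((dright ^^ (the_enat N2 + 1)) (dleft I)))
    | Special \<Rightarrow> dyad (dleft I))"

definition Delta :: "real measure \<Rightarrow> real measure \<Rightarrow> dyidx \<Rightarrow> real" where
  "Delta \<mu> \<nu> J = \<bar>measure \<mu> (dyad (dleft J)) / measure \<mu> (dyad J)
                    - measure \<nu> (dyad (dleft J)) / measure \<nu> (dyad J)\<bar>"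

definition Delta_mass :: "real measure \<Rightarrow> real measure \<Rightarrow> dyidx \<Rightarrow> real" where
  "Delta_mass \<mu> \<nu> J = (if measure \<mu> (dyad J) = 0 then 0 else Delta \<mu> \<nu> J * measure \<mu> (dyad J))"

definition W1 :: "real measure \<Rightarrow> real measure \<Rightarrow> real" where
  "W1 \<nu>1 \<nu>2 = Sup {\<bar>(\<integral>x. \<psi> x \<partial>\<nu>1) - (\<integral>x. \<psi> x \<partial>\<nu>2)\<bar> | \<psi>.
       lipschitz_on 1 UNIV \<psi> \<and> (\<forall>x. x \<notin> {0..1} \<longrightarrow> \<psi> x = 0)}"

definition Tmap :: "dyidx \<Rightarrow> real \<Rightarrow> real" where
  "Tmap J x = 2 ^ fst J * x - real (snd J)"

definition normalized :: "real measure \<Rightarrow> dyidx \<Rightarrow> real measure" where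
  "normalized \<mu> J = (if measure \<mu> (dyad J) = 0 then null_measure borel
     else scale_measure (ennreal (1 / measure \<mu> (dyad J)))
            (distr (restrict_space \<mu> (dyad J)) borel (Tmap J)))"

definition alpha :: "real measure \<Rightarrow> real measure \<Rightarrow> dyidx \<Rightarrow> real" where
  "alpha \<mu> \<nu> J = W1 (normalized \<mu> J) (normalized \<nu> J)"

definition borel_prob_01 :: "real measure \<Rightarrow> bool" where
  "borel_prob_01 \<mu> \<longleftrightarrow> prob_space \<mu> \<and> sets \<mu> = sets borel \<and> emeasure \<mu> {0..<1} = 1"

definition dyadically_doubling :: "real measure \<Rightarrow> real \<Rightarrow> bool" where
  "dyadically_doubling \<nu> D \<longleftrightarrow> (\<forall>I. is_dyadic I \<longrightarrow>
      measure \<nu> (dyad I) \<le> D * measure \<nu> (dyad (dleft I)) \<and>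
      measure \<nu> (dyad I) \<le> D * measure \<nu> (dyad (dright I)))"

end

theory Submission
  imports Defs
begin

text \<open>
  Fix \<open>k\<close> with \<open>(1 - 1/D)^k \<le> 1/4\<close>, put \<open>c = 2^-k\<close> and let \<open>\<psi>\<close> be the plateau
  \<open>\<psi> y = max 0 (min c (min y (1 - y)))\<close>. Both \<open>\<psi>\<close> and \<open>x \<mapsto> \<psi> (2x) / 2\<close> are
  admissible in \<open>W1\<close>, and pulled back to \<open>I\<^sub>-\<close> resp. \<open>I\<close> they become the same function
  supported in \<open>I\<^sub>-\<close>; write \<open>G(\<mu>)\<close> for its integral. Hence \<open>\<alpha>(I)\<close> bounds
  \<open>|G(\<mu>)/\<mu>(I) - G(\<nu>)/\<nu>(I)|\<close> and \<open>\<alpha>(I\<^sub>-)\<close> bounds \<open>|G(\<mu>)/\<mu>(I\<^sub>-) - G(\<nu>)/\<nu>(I\<^sub>-)|\<close>.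
  Trivially \<open>G(\<mu>) \<le> c \<mu>(I\<^sub>-)\<close>; on the other side doubling forces the leftmost and
  rightmost descendants of \<open>I\<^sub>-\<close> of generation \<open>k\<close> to carry at most \<open>\<nu>(I\<^sub>-)/4\<close> each,
  and \<open>\<psi> = c\<close> on the rest, so \<open>G(\<nu>) \<ge> c \<nu>(I\<^sub>-)/2\<close>. Eliminating \<open>G\<close> gives
  \<open>\<Delta>(I)\<mu>(I) \<le> 2^(k+2) \<alpha>(I)\<mu>(I) + 2^(k+1) \<alpha>(I\<^sub>-)\<mu>(I\<^sub>-)\<close>, and also
  \<open>\<Delta>(I)\<mu>(I) \<le> 2^(k+2) \<alpha>(I)\<mu>(I) + 2\<mu>(I\<^sub>-)\<close>, which is what the special pair needs.
  Every other tail contains both \<open>I\<close> and \<open>I\<^sub>-\<close>.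
\<close>

lemma dyad_borel [measurable]: "dyad J \<in> sets borel"
  by (simp add: dyad_def)

lemma Tmap_measurable [measurable]: "Tmap J \<in> borel_measurable borel"
  unfolding Tmap_def by measurable

lemma mem_dyad_iff_Tmap: "x \<in> dyad J \<longleftrightarrow> 0 \<le> Tmap J x \<and> Tmap J x < 1"
  by (cases J) (simp add: dyad_def Tmap_def field_simps)

lemma Tmap_dleft: "Tmap (dleft J) x = 2 * Tmap J x"
  by (cases J) (simp add: dleft_def Tmap_def algebra_simps)

lemma Tmap_dright: "Tmap (dright J) x = 2 * Tmap J x - 1"
  by (cases J) (simp add: dright_def Tmap_def algebra_simps)

lemma Tmap_dleft_funpow: "Tmap ((dleft ^^ k) J) x = 2 ^ k * Tmap J x"
  by (induction k) (simp_all add: Tmap_dleft)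

lemma Tmap_dright_funpow: "Tmap ((dright ^^ k) J) x = 2 ^ k * Tmap J x - (2 ^ k - 1)"
  by (induction k) (simp_all add: Tmap_dright algebra_simps)

lemma is_dyadic_dleft: "is_dyadic J \<Longrightarrow> is_dyadic (dleft J)"
  by (cases J) (auto simp: is_dyadic_def dleft_def)

lemma is_dyadic_dright: "is_dyadic J \<Longrightarrow> is_dyadic (dright J)"
  by (cases J) (auto simp: is_dyadic_def dright_def)

lemma is_dyadic_dleft_funpow: "is_dyadic J \<Longrightarrow> is_dyadic ((dleft ^^ k) J)"
  by (induction k) (simp_all add: is_dyadic_dleft)

lemma is_dyadic_dright_funpow: "is_dyadic J \<Longrightarrow> is_dyadic ((dright ^^ k) J)"
  by (induction k) (simp_all add: is_dyadic_dright)

lemma dleft_neq: "dleft J \<noteq> J"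
  by (cases J) (simp add: dleft_def)

lemma dyad_eq_dleft_Un_dright: "dyad J = dyad (dleft J) \<union> dyad (dright J)"
  by (auto simp: mem_dyad_iff_Tmap Tmap_dleft Tmap_dright)

lemma dyad_dleft_Int_dright: "dyad (dleft J) \<inter> dyad (dright J) = {}"
  by (auto simp: mem_dyad_iff_Tmap Tmap_dleft Tmap_dright)

lemma dyad_dleft_subset: "dyad (dleft J) \<subseteq> dyad J"
  using dyad_eq_dleft_Un_dright by blast

lemma borel_prob_01_finite_measure: "borel_prob_01 M \<Longrightarrow> finite_measure M"
  unfolding borel_prob_01_def using prob_space.finite_measure by blast

lemma borel_prob_01_sets: "borel_prob_01 M \<Longrightarrow> sets M = sets borel"
  by (simp add: borel_prob_01_def)

lemma measure_dyad_eq_children: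
  assumes "finite_measure M" "sets M = sets borel"
  shows "measure M (dyad J) = measure M (dyad (dleft J)) + measure M (dyad (dright J))"
proof -
  interpret finite_measure M by fact
  show ?thesis
    by (subst dyad_eq_dleft_Un_dright)
       (rule finite_measure_Union, auto simp: assms(2) dyad_dleft_Int_dright)
qed

lemma measure_dyad_root: "borel_prob_01 M \<Longrightarrow> measure M (dyad (0, 0)) = 1"
  by (simp add: borel_prob_01_def dyad_def measure_def)

subsection \<open>Dyadically doubling measures\<close>

context
  fixes \<nu> :: "real measure" and D :: real
  assumes prob: "borel_prob_01 \<nu>" and doubling: "dyadically_doubling \<nu> D"
begin

lemma measure_dyad_le_doubling:
  assumes "is_dyadic J"
  shows "measure \<nu> (dyad J) \<le> D * measure \<nu> (dyad (dleft J))"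
    and "measure \<nu> (dyad J) \<le> D * measure \<nu> (dyad (dright J))"
  using doubling assms unfolding dyadically_doubling_def by blast+

lemma doubling_constant_ge_1: "D \<ge> 1"
proof (rule ccontr)
  assume "\<not> D \<ge> 1"
  define x where "x = measure \<nu> (dyad (dright (0, 0)))"
  have "1 \<le> D * x"
    using measure_dyad_le_doubling(2)[of "(0, 0)"] measure_dyad_root[OF prob]
    by (simp add: is_dyadic_def x_def)
  moreover have "x \<le> 1"
    using prob unfolding borel_prob_01_def x_def by (simp add: prob_space.prob_le_1)
  moreover have "x \<ge> 0" by (simp add: x_def)
  ultimately show False
    using \<open>\<not> D \<ge> 1\<close> mult_left_le[of x D] mult_nonpos_nonneg[of D x] by (cases "D \<ge> 0") auto
qed

lemma measure_dyad_pos: "is_dyadic J \<Longrightarrow> measure \<nu> (dyad J) > 0"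
proof (induction J rule: prod.induct)
  case (Pair n j)
  then show ?case
  proof (induction n arbitrary: j)
    case 0
    then show ?case using measure_dyad_root[OF prob] by (simp add: is_dyadic_def)
  next
    case (Suc n)
    define P where "P = (n, j div 2)"
    have P: "is_dyadic P"
      using Suc.prems by (simp add: P_def is_dyadic_def less_mult_imp_div_less)
    have "(Suc n, j) = dleft P \<or> (Suc n, j) = dright P"
      by (cases "even j") (auto simp: P_def dleft_def dright_def elim!: evenE oddE)
    then have "measure \<nu> (dyad P) \<le> D * measure \<nu> (dyad (Suc n, j))"
      using measure_dyad_le_doubling[OF P] by metis
    moreover have "measure \<nu> (dyad P) > 0"
      using Suc.IH P by (simp add: P_def)
    ultimately show ?case
      using doubling_constant_ge_1 by (smt (verit) measure_nonneg mult_nonneg_nonpos)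
  qed
qed

lemma measure_dyad_child_le:
  assumes "is_dyadic J"
  shows "measure \<nu> (dyad (dleft J)) \<le> (1 - 1/D) * measure \<nu> (dyad J)"
    and "measure \<nu> (dyad (dright J)) \<le> (1 - 1/D) * measure \<nu> (dyad J)"
proof -
  have D: "D > 0" using doubling_constant_ge_1 by simp
  have sum: "measure \<nu> (dyad J) = measure \<nu> (dyad (dleft J)) + measure \<nu> (dyad (dright J))"
    using measure_dyad_eq_children prob borel_prob_01_finite_measure borel_prob_01_sets by blast
  have "(1 - 1/D) * measure \<nu> (dyad J) = measure \<nu> (dyad J) - measure \<nu> (dyad J) / D"
    by (simp add: algebra_simps)
  moreover have "measure \<nu> (dyad J) / D \<le> measure \<nu> (dyad (dleft J))"
    and "measure \<nu> (dyad J) / D \<le> measure \<nu> (dyad (dright J))"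
    using measure_dyad_le_doubling[OF assms] D by (simp_all add: divide_le_eq mult.commute)
  ultimately show "measure \<nu> (dyad (dleft J)) \<le> (1 - 1/D) * measure \<nu> (dyad J)"
    and "measure \<nu> (dyad (dright J)) \<le> (1 - 1/D) * measure \<nu> (dyad J)"
    using sum by linarith+
qed

lemma measure_dyad_funpow_le:
  assumes "is_dyadic J"
  shows "measure \<nu> (dyad ((dleft ^^ k) J)) \<le> (1 - 1/D) ^ k * measure \<nu> (dyad J)"
    and "measure \<nu> (dyad ((dright ^^ k) J)) \<le> (1 - 1/D) ^ k * measure \<nu> (dyad J)"
proof -
  have q: "0 \<le> 1 - 1/D" using doubling_constant_ge_1 by simp
  show "measure \<nu> (dyad ((dleft ^^ k) J)) \<le> (1 - 1/D) ^ k * measure \<nu> (dyad J)"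
  proof (induction k)
    case (Suc k)
    have "measure \<nu> (dyad ((dleft ^^ Suc k) J)) \<le> (1 - 1/D) * measure \<nu> (dyad ((dleft ^^ k) J))"
      using measure_dyad_child_le(1)[OF is_dyadic_dleft_funpow[OF assms]] by simp
    also have "\<dots> \<le> (1 - 1/D) * ((1 - 1/D) ^ k * measure \<nu> (dyad J))"
      using Suc q by (rule mult_left_mono)
    finally show ?case by simp
  qed simp
  show "measure \<nu> (dyad ((dright ^^ k) J)) \<le> (1 - 1/D) ^ k * measure \<nu> (dyad J)"
  proof (induction k)
    case (Suc k)
    have "measure \<nu> (dyad ((dright ^^ Suc k) J)) \<le> (1 - 1/D) * measure \<nu> (dyad ((dright ^^ k) J))"
      using measure_dyad_child_le(2)[OF is_dyadic_dright_funpow[OF assms]] by simp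
    also have "\<dots> \<le> (1 - 1/D) * ((1 - 1/D) ^ k * measure \<nu> (dyad J))"
      using Suc q by (rule mult_left_mono)
    finally show ?case by simp
  qed simp
qed


lemma measure_dyad_minus_extremes_ge:
  assumes "is_dyadic J" "(1 - 1/D) ^ k \<le> 1/4"
  shows "measure \<nu> (dyad J) / 2
           \<le> measure \<nu> (dyad J - dyad ((dleft ^^ k) J) - dyad ((dright ^^ k) J))"
proof -
  interpret finite_measure \<nu> using borel_prob_01_finite_measure[OF prob] .
  note sets = borel_prob_01_sets[OF prob]
  let ?A = "dyad ((dleft ^^ k) J)" and ?B = "dyad ((dright ^^ k) J)"
  let ?M = "dyad J - ?A - ?B"
  have "measure \<nu> (dyad J) \<le> measure \<nu> (?M \<union> ?A \<union> ?B)"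
    by (rule finite_measure_mono) (auto simp: sets)
  also have "\<dots> \<le> measure \<nu> (?M \<union> ?A) + measure \<nu> ?B"
    by (rule measure_Un_le) (auto simp: sets)
  also have "measure \<nu> (?M \<union> ?A) \<le> measure \<nu> ?M + measure \<nu> ?A"
    by (rule measure_Un_le) (auto simp: sets)
  finally have "measure \<nu> (dyad J) \<le> measure \<nu> ?M + measure \<nu> ?A + measure \<nu> ?B"
    by simp
  moreover have "measure \<nu> ?A \<le> measure \<nu> (dyad J) / 4" "measure \<nu> ?B \<le> measure \<nu> (dyad J) / 4"
    using measure_dyad_funpow_le[OF assms(1), of k]
      mult_right_mono[OF assms(2) measure_nonneg[of \<nu> "dyad J"]] by simp_all
  ultimately show ?thesis by linarith
qed

end

subsection \<open>Test functions for the Wasserstein distance\<close>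

definition W1_test :: "(real \<Rightarrow> real) \<Rightarrow> bool" where
  "W1_test \<psi> \<longleftrightarrow> lipschitz_on 1 UNIV \<psi> \<and> (\<forall>x. x \<notin> {0..1} \<longrightarrow> \<psi> x = 0)"

lemma W1_test_measurable: "W1_test \<psi> \<Longrightarrow> \<psi> \<in> borel_measurable borel"
  unfolding W1_test_def
  by (intro borel_measurable_continuous_onI lipschitz_on_continuous_on) blast

lemma W1_test_abs_le:
  assumes "W1_test \<psi>"
  shows "\<bar>\<psi> x\<bar> \<le> 2"
proof (cases "x \<in> {0..1}")
  case True
  have "dist (\<psi> x) (\<psi> (-1)) \<le> 1 * dist x (-1)"
    using assms unfolding W1_test_def by (intro lipschitz_onD) auto
  moreover have "\<psi> (-1) = 0" using assms by (simp add: W1_test_def)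
  ultimately show ?thesis using True by (simp add: dist_real_def)
next
  case False
  then show ?thesis using assms by (simp add: W1_test_def)
qed

lemma
  fixes f :: "real \<Rightarrow> real"
  assumes "sets M = sets borel" "finite_measure M" and f: "f \<in> borel_measurable borel"
    and bound: "\<And>x. \<bar>f x\<bar> \<le> B" and A: "A \<in> sets borel"
  shows integrable_indicator_times_bounded: "integrable M (\<lambda>t. indicator A t * f t)"
    and integral_indicator_times_bounded_abs_le:
      "\<bar>\<integral>t. indicator A t * f t \<partial>M\<bar> \<le> B * measure M A"
proof -
  interpret finite_measure M by fact
  note sets = measurable_cong_sets[OF assms(1) refl]
  have B: "0 \<le> B" using bound[of 0] by linarith
  have "(\<lambda>t. indicator A t * f t) \<in> borel_measurable M"
    using f A by (simp add: sets)
  then show "integrable M (\<lambda>t. indicator A t * f t)"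
    by (intro integrable_const_bound[where B = B]) (use bound B in \<open>auto simp: indicator_def\<close>)
  have "emeasure M A < \<top>"
    by (metis emeasure_finite less_top)
  then have "integrable M (\<lambda>t. indicator A t * B)"
    using A assms(1) by (intro integrable_mult_left) (simp add: integrable_indicator_iff)
  then have "(\<integral>t. \<bar>indicator A t * f t\<bar> \<partial>M) \<le> (\<integral>t. indicator A t * B \<partial>M)"
    by (rule integral_mono') (use bound B in \<open>auto simp: indicator_def abs_mult\<close>)
  also have "\<dots> = B * measure M A"
    using A assms(1) by simp
  finally show "\<bar>\<integral>t. indicator A t * f t \<partial>M\<bar> \<le> B * measure M A"
    using integral_abs_bound[of M "\<lambda>t. indicator A t * f t"] by linarith
qed

lemma integral_normalized:
  assumes sets: "sets M = sets borel" and "finite_measure M" and pos: "measure M (dyad J) > 0"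
    and f [measurable]: "f \<in> borel_measurable borel"
  shows "(\<integral>x. f x \<partial>normalized M J)
           = (\<integral>t. indicator (dyad J) t * f (Tmap J t) \<partial>M) / measure M (dyad J)"
proof -
  interpret finite_measure M by fact
  define m where "m = measure M (dyad J)"
  define N where "N = distr (restrict_space M (dyad J)) borel (Tmap J)"
  have T: "Tmap J \<in> measurable (restrict_space M (dyad J)) borel"
    by (rule measurable_restrict_space1) (simp add: measurable_cong_sets[OF sets refl])
  have "normalized M J = density N (\<lambda>_. ennreal (1/m))"
    unfolding normalized_def using pos
    by (intro measure_eqI) (auto simp: m_def N_def emeasure_density_const)
  then have "(\<integral>x. f x \<partial>normalized M J) = (\<integral>x. (1/m) *\<^sub>R f x \<partial>N)"
    by (simp add: integral_density N_def m_def)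
  also have "\<dots> = (1/m) * (\<integral>t. f (Tmap J t) \<partial>restrict_space M (dyad J))"
    unfolding N_def by (simp add: integral_distr[OF T f])
  also have "(\<integral>t. f (Tmap J t) \<partial>restrict_space M (dyad J))
               = (\<integral>t. indicator (dyad J) t *\<^sub>R f (Tmap J t) \<partial>M)"
    by (rule integral_restrict_space) (simp add: sets_eq_imp_space_eq[OF sets] sets)
  finally show ?thesis by (simp add: m_def)
qed

lemma integral_normalized_abs_le:
  assumes "sets M = sets borel" "finite_measure M" "W1_test \<psi>"
  shows "\<bar>\<integral>x. \<psi> x \<partial>normalized M J\<bar> \<le> 2"
proof (cases "measure M (dyad J) = 0")
  case True
  then show ?thesis by (simp add: normalized_def)
next
  case False
  then have pos: "measure M (dyad J) > 0" by (simp add: order_neq_le_trans)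
  note [measurable] = W1_test_measurable[OF assms(3)]
  have "\<bar>\<integral>t. indicator (dyad J) t * \<psi> (Tmap J t) \<partial>M\<bar> \<le> 2 * measure M (dyad J)"
    by (rule integral_indicator_times_bounded_abs_le[OF assms(1,2)])
       (use W1_test_abs_le[OF assms(3)] in auto)
  then show ?thesis
    using pos by (simp add: integral_normalized[OF assms(1,2) pos] divide_le_eq)
qed

lemma integral_normalized_diff_le_alpha:
  assumes "borel_prob_01 \<mu>" "borel_prob_01 \<nu>" "W1_test \<psi>"
  shows "\<bar>(\<integral>x. \<psi> x \<partial>normalized \<mu> J) - (\<integral>x. \<psi> x \<partial>normalized \<nu> J)\<bar> \<le> alpha \<mu> \<nu> J"
proof -
  let ?S = "{\<bar>(\<integral>x. \<phi> x \<partial>normalized \<mu> J) - (\<integral>x. \<phi> x \<partial>normalized \<nu> J)\<bar> | \<phi>. W1_test \<phi>}"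
  have "bdd_above ?S"
  proof (rule bdd_aboveI)
    fix y assume "y \<in> ?S"
    then obtain \<phi> where "W1_test \<phi>"
      and y: "y = \<bar>(\<integral>x. \<phi> x \<partial>normalized \<mu> J) - (\<integral>x. \<phi> x \<partial>normalized \<nu> J)\<bar>" by blast
    have "\<bar>\<integral>x. \<phi> x \<partial>normalized M J\<bar> \<le> 2" if "borel_prob_01 M" for M
      using integral_normalized_abs_le borel_prob_01_sets borel_prob_01_finite_measure
        \<open>W1_test \<phi>\<close> that by blast
    from this[OF assms(1)] this[OF assms(2)] show "y \<le> 4"
      using y by linarith
  qed
  moreover have "\<bar>(\<integral>x. \<psi> x \<partial>normalized \<mu> J) - (\<integral>x. \<psi> x \<partial>normalized \<nu> J)\<bar> \<in> ?S"
    using assms(3) by blast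
  ultimately show ?thesis
    unfolding alpha_def W1_def W1_test_def[symmetric] by (rule cSup_upper[rotated])
qed

lemma alpha_nonneg:
  assumes "borel_prob_01 \<mu>" "borel_prob_01 \<nu>"
  shows "alpha \<mu> \<nu> J \<ge> 0"
proof -
  have "W1_test (\<lambda>_. 0)" by (simp add: W1_test_def lipschitz_on_def)
  from integral_normalized_diff_le_alpha[OF assms this] show ?thesis by simp
qed

definition plateau :: "real \<Rightarrow> real \<Rightarrow> real" where
  "plateau c y = max 0 (min c (min y (1 - y)))"

lemma W1_test_plateau: "W1_test (plateau c)"
  unfolding W1_test_def
  by (auto intro!: lipschitz_onI simp: dist_real_def plateau_def max_def min_def)

lemma W1_test_plateau_half: "W1_test (\<lambda>x. plateau c (2 * x) / 2)"
proof -
  have eq: "(\<lambda>x. plateau c (2 * x) / 2) = (\<lambda>x. max 0 (min (c/2) (min x (1/2 - x))))"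
    by (auto simp: plateau_def max_def min_def)
  show ?thesis
    unfolding W1_test_def eq
    by (auto intro!: lipschitz_onI simp: dist_real_def max_def min_def)
qed

lemma plateau_nonneg: "0 \<le> plateau c y"
  by (simp add: plateau_def)

lemma plateau_abs_le: "0 \<le> c \<Longrightarrow> \<bar>plateau c y\<bar> \<le> c"
  by (simp add: plateau_def)

lemma plateau_eq_height: "0 \<le> c \<Longrightarrow> c \<le> y \<Longrightarrow> c \<le> 1 - y \<Longrightarrow> plateau c y = c"
  by (simp add: plateau_def)

lemma plateau_Tmap_measurable [measurable]:
  "(\<lambda>t. plateau c (Tmap J t)) \<in> borel_measurable borel"
  using W1_test_measurable[OF W1_test_plateau] by measurable

definition plateau_mass :: "real measure \<Rightarrow> dyidx \<Rightarrow> real \<Rightarrow> real" where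
  "plateau_mass M J c = (\<integral>t. indicator (dyad J) t * plateau c (Tmap J t) \<partial>M)"

lemma integral_plateau_normalized:
  assumes "sets M = sets borel" "finite_measure M" "measure M (dyad J) > 0"
  shows "(\<integral>x. plateau c x \<partial>normalized M J) = plateau_mass M J c / measure M (dyad J)"
  unfolding plateau_mass_def
  by (rule integral_normalized[OF assms W1_test_measurable[OF W1_test_plateau]])

lemma integral_plateau_half_normalized:
  assumes "sets M = sets borel" "finite_measure M" "measure M (dyad J) > 0"
  shows "(\<integral>x. plateau c (2 * x) / 2 \<partial>normalized M J)
           = plateau_mass M (dleft J) c / (2 * measure M (dyad J))"
proof -
  have pointwise: "indicator (dyad J) t * (plateau c (2 * Tmap J t) / 2)
          = indicator (dyad (dleft J)) t * plateau c (Tmap (dleft J) t) / 2" for t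
    using dyad_dleft_subset[of J]
    by (auto simp: indicator_def mem_dyad_iff_Tmap Tmap_dleft plateau_def)
  have "(\<integral>x. plateau c (2 * x) / 2 \<partial>normalized M J)
          = (\<integral>t. indicator (dyad J) t * (plateau c (2 * Tmap J t) / 2) \<partial>M) / measure M (dyad J)"
    by (rule integral_normalized[OF assms W1_test_measurable[OF W1_test_plateau_half]])
  also have "\<dots> = plateau_mass M (dleft J) c / (2 * measure M (dyad J))"
    by (simp only: pointwise) (simp add: plateau_mass_def)
  finally show ?thesis .
qed

lemma plateau_mass_nonneg: "0 \<le> plateau_mass M J c"
  unfolding plateau_mass_def by (intro integral_nonneg_AE AE_I2) (simp add: plateau_nonneg)

lemma plateau_mass_le:
  assumes "sets M = sets borel" "finite_measure M" "0 \<le> c"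
  shows "plateau_mass M J c \<le> c * measure M (dyad J)"
proof -
  have "\<bar>plateau_mass M J c\<bar> \<le> c * measure M (dyad J)"
    unfolding plateau_mass_def
    by (rule integral_indicator_times_bounded_abs_le[OF assms(1,2) plateau_Tmap_measurable
          plateau_abs_le[OF assms(3)]]) simp
  then show ?thesis by simp
qed

lemma plateau_Tmap_eq_height:
  assumes "t \<in> dyad J - dyad ((dleft ^^ k) J) - dyad ((dright ^^ k) J)"
  shows "plateau (1 / 2 ^ k) (Tmap J t) = 1 / 2 ^ k"
proof -
  define L :: real where "L = 2 ^ k"
  have "L > 0" by (simp add: L_def)
  have T: "0 \<le> Tmap J t" "Tmap J t < 1" and
    "\<not> (0 \<le> L * Tmap J t \<and> L * Tmap J t < 1)"
    "\<not> (0 \<le> L * Tmap J t - (L - 1) \<and> L * Tmap J t - (L - 1) < 1)"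
    using assms by (auto simp: mem_dyad_iff_Tmap Tmap_dleft_funpow Tmap_dright_funpow L_def)
  then have "1 \<le> L * Tmap J t" "1 \<le> L * (1 - Tmap J t)"
    using \<open>L > 0\<close> mult_strict_left_mono[OF T(2) \<open>L > 0\<close>]
    by (auto simp: algebra_simps)
  then show ?thesis
    using \<open>L > 0\<close> by (intro plateau_eq_height) (simp_all add: L_def divide_le_eq mult.commute)
qed

lemma plateau_mass_ge:
  assumes "borel_prob_01 \<nu>" "dyadically_doubling \<nu> D" "is_dyadic J" "(1 - 1/D) ^ k \<le> 1/4"
  shows "measure \<nu> (dyad J) / 2 ^ (k + 1) \<le> plateau_mass \<nu> J (1 / 2 ^ k)"
proof -
  interpret finite_measure \<nu> using borel_prob_01_finite_measure[OF assms(1)] .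
  note sets = borel_prob_01_sets[OF assms(1)]
  define Mid where "Mid = dyad J - dyad ((dleft ^^ k) J) - dyad ((dright ^^ k) J)"
  have Mid [measurable]: "Mid \<in> sets borel" by (simp add: Mid_def)
  have "measure \<nu> (dyad J) / 2 ^ (k + 1) = (1 / 2 ^ k) * (measure \<nu> (dyad J) / 2)"
    by simp
  also have "\<dots> \<le> (1 / 2 ^ k) * measure \<nu> Mid"
    using measure_dyad_minus_extremes_ge[OF assms] by (intro mult_left_mono) (simp_all add: Mid_def)
  also have "\<dots> = (\<integral>t. indicator Mid t * (1 / 2 ^ k) \<partial>\<nu>)"
    by (simp add: sets)
  also have "\<dots> \<le> plateau_mass \<nu> J (1 / 2 ^ k)"
    unfolding plateau_mass_def
  proof (rule integral_mono)
    show "integrable \<nu> (\<lambda>t. indicator Mid t * (1 / 2 ^ k :: real))"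
      by (rule integrable_indicator_times_bounded[OF sets finite_measure_axioms]) auto
    show "integrable \<nu> (\<lambda>t. indicator (dyad J) t * plateau (1 / 2 ^ k) (Tmap J t))"
      by (rule integrable_indicator_times_bounded[OF sets finite_measure_axioms,
            OF plateau_Tmap_measurable plateau_abs_le]) auto
    show "indicator Mid t * (1 / 2 ^ k :: real) \<le> indicator (dyad J) t * plateau (1 / 2 ^ k) (Tmap J t)"
      for t
      using plateau_Tmap_eq_height[of t J k] plateau_nonneg
      by (auto simp: indicator_def Mid_def)
  qed
  finally show ?thesis .
qed

text \<open>In the next two lemmas read \<open>m, n, ml, nl\<close> as \<open>\<mu>(I), \<nu>(I), \<mu>(I\<^sub>-), \<nu>(I\<^sub>-)\<close>,
  \<open>Gm, Gn\<close> as \<open>G(\<mu>), G(\<nu>)\<close>, \<open>A, B\<close> as \<open>\<alpha>(I), \<alpha>(I\<^sub>-)\<close> and \<open>L\<close> as \<open>2^k\<close>.\<close>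

lemma ratio_gap_le_test_gaps:
  fixes m n ml nl Gm Gn A B L :: real
  assumes m: "m > 0" and ml: "ml \<ge> 0" and nl: "nl > 0" and L: "L > 0"
    and Gm: "0 \<le> Gm" "Gm \<le> ml / L" and Gn: "nl / (2 * L) \<le> Gn"
    and gap: "\<bar>Gm / m - Gn / n\<bar> \<le> 2 * A"
    and gap_child: "ml > 0 \<Longrightarrow> \<bar>Gm / ml - Gn / nl\<bar> \<le> B" and B: "B \<ge> 0"
  shows "\<bar>ml / m - nl / n\<bar> * m \<le> 4 * L * A * m + 2 * L * B * ml"
proof -
  define a b x where "a = ml / m" and "b = nl / n" and "x = Gn / nl"
  have "0 < nl / (2 * L)" using nl L by simp
  then have Gn0: "Gn > 0" using Gn by linarith
  have x: "x > 0" "1 / x \<le> 2 * L"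
    using Gn Gn0 nl L by (simp_all add: x_def field_simps)
  have a: "a \<ge> 0" using ml m by (simp add: a_def)
  have bx: "b * x = Gn / n" using nl by (simp add: b_def x_def)
  have key: "\<bar>(a - b) * x\<bar> \<le> 2 * A + a * B"
  proof (cases "ml = 0")
    case True
    then have "Gm = 0" "a = 0" using Gm by (simp_all add: a_def)
    then show ?thesis using gap bx by (simp add: algebra_simps)
  next
    case False
    then have "ml > 0" using ml by simp
    then have split: "(a - b) * x = (Gm / m - Gn / n) + a * (x - Gm / ml)"
      using m by (simp add: a_def algebra_simps bx[symmetric])
    have "\<bar>a * (x - Gm / ml)\<bar> \<le> a * B"
      using gap_child[OF \<open>ml > 0\<close>] a by (simp add: abs_mult abs_minus_commute x_def mult_left_mono)
    then show ?thesis unfolding split using gap by linarith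
  qed
  have "\<bar>a - b\<bar> = \<bar>(a - b) * x\<bar> * (1 / x)"
    using x by (simp add: abs_mult)
  also have "\<dots> \<le> (2 * A + a * B) * (2 * L)"
    by (rule mult_mono[OF key x(2)]) (use x a B gap in \<open>auto intro: add_nonneg_nonneg\<close>)
  finally have "\<bar>a - b\<bar> * m \<le> (2 * A + a * B) * (2 * L) * m"
    using m by (simp add: mult_right_mono)
  also have "\<dots> = 4 * L * A * m + 2 * L * B * ml"
    using m by (simp add: a_def algebra_simps)
  finally show ?thesis by (simp add: a_def b_def)
qed

lemma ratio_gap_le_test_gap:
  fixes m n ml nl Gm Gn A L :: real
  assumes m: "m > 0" and n: "n > 0" and ml: "ml \<ge> 0" and nl: "nl > 0" and L: "L > 0"
    and Gm: "0 \<le> Gm" "Gm \<le> ml / L" and Gn: "nl / (2 * L) \<le> Gn"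
    and gap: "\<bar>Gm / m - Gn / n\<bar> \<le> 2 * A"
  shows "\<bar>ml / m - nl / n\<bar> * m \<le> 4 * L * A * m + 2 * ml"
proof -
  define a b x where "a = ml / m" and "b = nl / n" and "x = Gn / nl"
  have "0 < nl / (2 * L)" using nl L by simp
  then have Gn0: "Gn > 0" using Gn by linarith
  have x: "x > 0" "1 / x \<le> 2 * L"
    using Gn Gn0 nl L by (simp_all add: x_def field_simps)
  have a: "a \<ge> 0" using ml m by (simp add: a_def)
  have A: "0 \<le> A" using gap by linarith
  have "\<bar>a - b\<bar> \<le> 4 * L * A + 2 * a"
  proof (cases "b \<le> a")
    case True
    have "b \<ge> 0" using nl n by (simp add: b_def)
    moreover have "0 \<le> 4 * L * A" using L A by simp
    ultimately show ?thesis using True a by linarith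
  next
    case False
    have "Gm / m \<le> a / L" using Gm(2) m L by (simp add: a_def field_simps)
    moreover have "b * x = Gn / n" using nl by (simp add: b_def x_def)
    ultimately have "(b - a) * x \<le> 2 * A + a / L"
      using gap a x by (smt (verit) left_diff_distrib mult_nonneg_nonneg)
    then have "(b - a) * x * (1 / x) \<le> (2 * A + a / L) * (2 * L)"
      by (rule mult_mono[OF _ x(2)]) (use x False A a L in \<open>auto intro: add_nonneg_nonneg\<close>)
    then show ?thesis using False x L by (simp add: algebra_simps)
  qed
  then have "\<bar>a - b\<bar> * m \<le> (4 * L * A + 2 * a) * m"
    using m by (simp add: mult_right_mono)
  then show ?thesis using m by (simp add: a_def b_def algebra_simps)
qed

lemma
  assumes \<mu>: "borel_prob_01 \<mu>" and \<nu>: "borel_prob_01 \<nu>" "dyadically_doubling \<nu> D"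
    and I: "is_dyadic I" and k: "(1 - 1/D) ^ k \<le> 1/4" and m: "measure \<mu> (dyad I) > 0"
  shows Delta_mass_le_alpha:
      "Delta_mass \<mu> \<nu> I \<le> 2 ^ (k + 2) * (alpha \<mu> \<nu> I * measure \<mu> (dyad I))
         + 2 ^ (k + 1) * (alpha \<mu> \<nu> (dleft I) * measure \<mu> (dyad (dleft I)))"
    and Delta_mass_le_alpha_mass:
      "Delta_mass \<mu> \<nu> I \<le> 2 ^ (k + 2) * (alpha \<mu> \<nu> I * measure \<mu> (dyad I))
         + 2 * measure \<mu> (dyad (dleft I))"
proof -
  define L :: real where "L = 2 ^ k"
  have L: "L > 0" by (simp add: L_def)
  define G where "G M = plateau_mass M (dleft I) (1 / L)" for M
  note sets = borel_prob_01_sets and fin = borel_prob_01_finite_measure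
  have n: "measure \<nu> (dyad I) > 0" and nl: "measure \<nu> (dyad (dleft I)) > 0"
    using measure_dyad_pos[OF \<nu>] I is_dyadic_dleft by blast+
  have "\<bar>G \<mu> / (2 * measure \<mu> (dyad I)) - G \<nu> / (2 * measure \<nu> (dyad I))\<bar> \<le> alpha \<mu> \<nu> I"
    using integral_normalized_diff_le_alpha[OF \<mu> \<nu>(1) W1_test_plateau_half[of "1 / L"], where J = I]
    unfolding G_def integral_plateau_half_normalized[OF sets[OF \<mu>] fin[OF \<mu>] m]
      integral_plateau_half_normalized[OF sets[OF \<nu>(1)] fin[OF \<nu>(1)] n] .
  then have gap: "\<bar>G \<mu> / measure \<mu> (dyad I) - G \<nu> / measure \<nu> (dyad I)\<bar> \<le> 2 * alpha \<mu> \<nu> I"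
    by (simp add: field_simps)
  have gap_child: "\<bar>G \<mu> / measure \<mu> (dyad (dleft I)) - G \<nu> / measure \<nu> (dyad (dleft I))\<bar>
                     \<le> alpha \<mu> \<nu> (dleft I)" if "measure \<mu> (dyad (dleft I)) > 0"
    using integral_normalized_diff_le_alpha[OF \<mu> \<nu>(1) W1_test_plateau[of "1 / L"], where J = "dleft I"]
    by (simp add: integral_plateau_normalized sets fin \<mu> \<nu> that nl G_def)
  have Gm: "0 \<le> G \<mu>" "G \<mu> \<le> measure \<mu> (dyad (dleft I)) / L"
    using plateau_mass_nonneg plateau_mass_le[OF sets[OF \<mu>] fin[OF \<mu>], where c = "1 / L" and J = "dleft I"] L
    by (simp_all add: G_def)
  have Gn: "measure \<nu> (dyad (dleft I)) / (2 * L) \<le> G \<nu>"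
    using plateau_mass_ge[OF \<nu> is_dyadic_dleft[OF I] k] by (simp add: G_def L_def)
  have Delta: "Delta_mass \<mu> \<nu> I = \<bar>measure \<mu> (dyad (dleft I)) / measure \<mu> (dyad I)
                 - measure \<nu> (dyad (dleft I)) / measure \<nu> (dyad I)\<bar> * measure \<mu> (dyad I)"
    using m by (simp add: Delta_mass_def Delta_def)
  show "Delta_mass \<mu> \<nu> I \<le> 2 ^ (k + 2) * (alpha \<mu> \<nu> I * measure \<mu> (dyad I))
      + 2 ^ (k + 1) * (alpha \<mu> \<nu> (dleft I) * measure \<mu> (dyad (dleft I)))"
    using ratio_gap_le_test_gaps[OF m measure_nonneg nl L Gm Gn gap gap_child
        alpha_nonneg[OF \<mu> \<nu>(1)]]
    by (simp add: Delta L_def algebra_simps)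
  show "Delta_mass \<mu> \<nu> I \<le> 2 ^ (k + 2) * (alpha \<mu> \<nu> I * measure \<mu> (dyad I))
      + 2 * measure \<mu> (dyad (dleft I))"
    using ratio_gap_le_test_gap[OF m n measure_nonneg nl L Gm Gn gap]
    by (simp add: Delta L_def algebra_simps)
qed

lemma Delta_mass_le_alpha_pair:
  assumes \<mu>: "borel_prob_01 \<mu>" and \<nu>: "borel_prob_01 \<nu>" "dyadically_doubling \<nu> D"
    and "is_dyadic I" "(1 - 1/D) ^ k \<le> 1/4"
  shows "Delta_mass \<mu> \<nu> I \<le> 2 ^ (k + 2) * (alpha \<mu> \<nu> I * measure \<mu> (dyad I)
           + alpha \<mu> \<nu> (dleft I) * measure \<mu> (dyad (dleft I)))"
proof (cases "measure \<mu> (dyad I) = 0")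
  case True
  then show ?thesis using alpha_nonneg[OF \<mu> \<nu>(1)] by (simp add: Delta_mass_def)
next
  case False
  then have "measure \<mu> (dyad I) > 0" by (simp add: order_neq_le_trans)
  define y where "y = alpha \<mu> \<nu> (dleft I) * measure \<mu> (dyad (dleft I))"
  have "(2::real) ^ (k + 1) * y \<le> 2 ^ (k + 2) * y"
    using alpha_nonneg[OF \<mu> \<nu>(1)] by (intro mult_right_mono) (simp_all add: y_def)
  with Delta_mass_le_alpha[OF assms \<open>measure \<mu> (dyad I) > 0\<close>, folded y_def] show ?thesis
    unfolding y_def[symmetric] distrib_left by linarith
qed

lemma Delta_mass_le_alpha_Tip:
  assumes \<mu>: "borel_prob_01 \<mu>" and \<nu>: "borel_prob_01 \<nu>" "dyadically_doubling \<nu> D"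
    and "is_dyadic I" "(1 - 1/D) ^ k \<le> 1/4"
  shows "Delta_mass \<mu> \<nu> I \<le> 2 ^ (k + 2) * (alpha \<mu> \<nu> I * measure \<mu> (dyad I))
           + 4 * measure \<mu> (dyad (dleft I))"
proof (cases "measure \<mu> (dyad I) = 0")
  case True
  then show ?thesis using alpha_nonneg[OF \<mu> \<nu>(1)] by (simp add: Delta_mass_def)
next
  case False
  then have "measure \<mu> (dyad I) > 0" by (simp add: order_neq_le_trans)
  then show ?thesis
    using Delta_mass_le_alpha_mass[OF assms] measure_nonneg[of \<mu> "dyad (dleft I)"] by linarith
qed

lemma Tail_Reg_contains: "{I, dleft I} \<subseteq> Tail (Reg N1 N2) I"
  unfolding Tail_def by (auto intro!: exI[of _ 0] simp: zero_enat_def[symmetric])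

lemma infsum_pair_le:
  fixes f :: "'a \<Rightarrow> ennreal"
  assumes "a \<noteq> b" "{a, b} \<subseteq> A"
  shows "f a + f b \<le> (\<Sum>\<^sub>\<infinity>x\<in>A. f x)"
proof -
  have "(\<Sum>\<^sub>\<infinity>x\<in>{a, b}. f x) \<le> (\<Sum>\<^sub>\<infinity>x\<in>A. f x)"
    by (rule infsum_mono_neutral) (use assms(2) in \<open>auto intro: nonneg_summable_on_complete\<close>)
  then show ?thesis using assms(1) by simp
qed

lemma Delta_mass_le_Tail:
  assumes \<mu>: "borel_prob_01 \<mu>" and \<nu>: "borel_prob_01 \<nu>" "dyadically_doubling \<nu> D"
    and "is_dyadic I" "(1 - 1/D) ^ k \<le> 1/4"
  shows "ennreal (Delta_mass \<mu> \<nu> I)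
           \<le> ennreal (2 ^ (k + 2)) * (\<Sum>\<^sub>\<infinity>J\<in>Tail p I. ennreal (alpha \<mu> \<nu> J * measure \<mu> (dyad J)))
             + 4 * ennreal (measure \<mu> (Tip p I))"
proof -
  define C :: real where "C = 2 ^ (k + 2)"
  define a where "a J = alpha \<mu> \<nu> J * measure \<mu> (dyad J)" for J
  have C: "C \<ge> 0" by (simp add: C_def)
  have a: "a J \<ge> 0" for J using alpha_nonneg[OF \<mu> \<nu>(1)] by (simp add: a_def)
  have "ennreal (Delta_mass \<mu> \<nu> I) \<le> ennreal C * (\<Sum>\<^sub>\<infinity>J\<in>Tail p I. ennreal (a J))
          + 4 * ennreal (measure \<mu> (Tip p I))"
  proof (cases p)
    case (Reg N1 N2)
    have "ennreal (Delta_mass \<mu> \<nu> I) \<le> ennreal (C * (a I + a (dleft I)))"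
      using Delta_mass_le_alpha_pair[OF assms] by (simp add: C_def a_def ennreal_leI)
    also have "\<dots> = ennreal C * (ennreal (a I) + ennreal (a (dleft I)))"
      using a C by (simp add: ennreal_mult ennreal_plus)
    also have "\<dots> \<le> ennreal C * (\<Sum>\<^sub>\<infinity>J\<in>Tail p I. ennreal (a J))"
      using infsum_pair_le[OF dleft_neq[symmetric] Tail_Reg_contains[of I N1 N2, folded Reg]]
      by (rule mult_left_mono) simp
    finally show ?thesis by (rule order.trans) (simp add: add_increasing2)
  next
    case Special
    have "ennreal (Delta_mass \<mu> \<nu> I) \<le> ennreal (C * a I + 4 * measure \<mu> (dyad (dleft I)))"
      using Delta_mass_le_alpha_Tip[OF assms] by (simp add: C_def a_def ennreal_leI)
    also have "\<dots> = ennreal C * ennreal (a I) + 4 * ennreal (measure \<mu> (dyad (dleft I)))"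
      using a C by (simp add: ennreal_mult ennreal_plus)
    finally show ?thesis by (simp add: Special Tail_def Tip_def)
  qed
  then show ?thesis by (simp add: C_def a_def)
qed

theorem mainTheorem14:
  fixes \<kappa> D :: real
  assumes "\<kappa> > 0"
  shows "\<exists>C::real. \<forall>\<mu> \<nu>.
    borel_prob_01 \<mu> \<and> borel_prob_01 \<nu> \<and>
    (\<forall>j k :: nat. measure \<mu> {real j / 2 ^ k} = 0) \<and>
    dyadically_doubling \<nu> D \<longrightarrow>
    (\<forall>I p. is_dyadic I \<longrightarrow>
       ennreal (Delta_mass \<mu> \<nu> I)
       \<le> ennreal C * (\<Sum>\<^sub>\<infinity>J\<in>Tail p I. ennreal (alpha \<mu> \<nu> J * measure \<mu> (dyad J)))
         + ennreal \<kappa> * (\<Sum>\<^sub>\<infinity>J\<in>Tail p I. ennreal (Delta_mass \<mu> \<nu> J))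
         + 4 * ennreal (measure \<mu> (Tip p I)))"
proof -
  have "1 - 1 / max D 1 < 1" by simp
  from real_arch_pow_inv[of "1/4", OF _ this]
  obtain k where k: "(1 - 1 / max D 1) ^ k < 1/4" by auto
  show ?thesis
  proof (intro exI[of _ "2 ^ (k + 2)"] allI impI)
    fix \<mu> \<nu> I p
    assume "borel_prob_01 \<mu> \<and> borel_prob_01 \<nu> \<and> (\<forall>j k :: nat. measure \<mu> {real j / 2 ^ k} = 0)
      \<and> dyadically_doubling \<nu> D" and I: "is_dyadic I"
    then have \<mu>: "borel_prob_01 \<mu>" and \<nu>: "borel_prob_01 \<nu>" "dyadically_doubling \<nu> D" by auto
    have "(1 - 1/D) ^ k \<le> 1/4"
      using k doubling_constant_ge_1[OF \<nu>] by (simp add: max_def)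
    from Delta_mass_le_Tail[OF \<mu> \<nu> I this, of p]
    show "ennreal (Delta_mass \<mu> \<nu> I)
       \<le> ennreal (2 ^ (k + 2)) * (\<Sum>\<^sub>\<infinity>J\<in>Tail p I. ennreal (alpha \<mu> \<nu> J * measure \<mu> (dyad J)))
         + ennreal \<kappa> * (\<Sum>\<^sub>\<infinity>J\<in>Tail p I. ennreal (Delta_mass \<mu> \<nu> J))
         + 4 * ennreal (measure \<mu> (Tip p I))"
      by (rule order.trans) (intro add_right_mono add_increasing2; simp)
  qed
qed

end
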